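(* Let $M$ be any matroid and let $N$ be a matroid whose simplification is the free matroid $U_{n,n}$. Then a tensor product of $M$ and $N$ exists and is unique.
   Context: Quasi product of matroids $M,N$: a matroid $P$ on $E(M)\times E(N)$ such that for every non-loop $e\in E(M)$, $x\mapsto(e,x)$ is an isomorphism $N\cong P|_{\{e\}\times E(N)}$; for every non-loop $f\in E(N)$, $x\mapsto(x,f)$ is an isomorphism $M\cong P|_{E(M)\times\{f\}}$; and the rows $\{e\}\times E(N)$ with $e$ a loop of $M$ and columns $E(M)\times\{f\}$ with $f$ a loop of $N$ have rank $0$. A tensor product is a quasi product of rank $\mathrm{rk}(M)\mathrm{rk}(N)$. $U_{n,n}$ is the free matroid of rank $n$ on $n$ elements. *)

theory Defs
  imports Main
begin

type_synonym 'a matroid = "'a set \<times> 'a set set"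

definition ground :: "'a matroid \<Rightarrow> 'a set" where
  "ground M = fst M"

definition indep :: "'a matroid \<Rightarrow> 'a set \<Rightarrow> bool" where
  "indep M I \<longleftrightarrow> I \<in> snd M"

definition matroid :: "'a matroid \<Rightarrow> bool" where
  "matroid M \<longleftrightarrow> finite (ground M)
     \<and> (\<forall>I. indep M I \<longrightarrow> I \<subseteq> ground M)
     \<and> indep M {}
     \<and> (\<forall>I J. indep M J \<and> I \<subseteq> J \<longrightarrow> indep M I)
     \<and> (\<forall>I J. indep M I \<and> indep M J \<and> card I < card J
           \<longrightarrow> (\<exists>x\<in>J - I. indep M (insert x I)))"

definition rank :: "'a matroid \<Rightarrow> 'a set \<Rightarrow> nat" where
  "rank M X = Max (card ` {I. indep M I \<and> I \<subseteq> X})"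

definition rk :: "'a matroid \<Rightarrow> nat" where
  "rk M = rank M (ground M)"

definition restrict :: "'a matroid \<Rightarrow> 'a set \<Rightarrow> 'a matroid" where
  "restrict M S = (S, {I. indep M I \<and> I \<subseteq> S})"

definition loop :: "'a matroid \<Rightarrow> 'a \<Rightarrow> bool" where
  "loop M e \<longleftrightarrow> e \<in> ground M \<and> \<not> indep M {e}"

definition matroid_iso :: "('a \<Rightarrow> 'b) \<Rightarrow> 'a matroid \<Rightarrow> 'b matroid \<Rightarrow> bool" where
  "matroid_iso f M N \<longleftrightarrow> bij_betw f (ground M) (ground N)
     \<and> (\<forall>I. I \<subseteq> ground M \<longrightarrow> (indep M I \<longleftrightarrow> indep N (f ` I)))"

definition free_matroid :: "nat \<Rightarrow> nat matroid" where
  "free_matroid n = ({0..<n}, Pow {0..<n})"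

definition parallel :: "'a matroid \<Rightarrow> 'a \<Rightarrow> 'a \<Rightarrow> bool" where
  "parallel M e f \<longleftrightarrow> e \<in> ground M \<and> f \<in> ground M \<and> \<not> loop M e \<and> \<not> loop M f
     \<and> (e = f \<or> \<not> indep M {e, f})"

definition is_simplification :: "'a matroid \<Rightarrow> 'a matroid \<Rightarrow> bool" where
  "is_simplification M S \<longleftrightarrow> (\<exists>T. T \<subseteq> ground M \<and> (\<forall>t\<in>T. \<not> loop M t)
     \<and> (\<forall>e\<in>ground M. \<not> loop M e \<longrightarrow> (\<exists>!t. t \<in> T \<and> parallel M e t))
     \<and> S = restrict M T)"

definition simplification_is_free :: "'a matroid \<Rightarrow> nat \<Rightarrow> bool" where
  "simplification_is_free M n \<longleftrightarrow>
     (\<exists>S f. is_simplification M S \<and> matroid_iso f S (free_matroid n))"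

definition quasi_product :: "'a matroid \<Rightarrow> 'b matroid \<Rightarrow> ('a \<times> 'b) matroid \<Rightarrow> bool" where
  "quasi_product M N P \<longleftrightarrow> matroid P \<and> ground P = ground M \<times> ground N
     \<and> (\<forall>e\<in>ground M. \<not> loop M e \<longrightarrow>
          matroid_iso (\<lambda>x. (e, x)) N (restrict P ({e} \<times> ground N)))
     \<and> (\<forall>f\<in>ground N. \<not> loop N f \<longrightarrow>
          matroid_iso (\<lambda>x. (x, f)) M (restrict P (ground M \<times> {f})))
     \<and> (\<forall>e\<in>ground M. loop M e \<longrightarrow> rank P ({e} \<times> ground N) = 0)
     \<and> (\<forall>f\<in>ground N. loop N f \<longrightarrow> rank P (ground M \<times> {f}) = 0)"

definition tensor_product :: "'a matroid \<Rightarrow> 'b matroid \<Rightarrow> ('a \<times> 'b) matroid \<Rightarrow> bool" where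
  "tensor_product M N P \<longleftrightarrow> quasi_product M N P \<and> rk P = rk M * rk N"

end

theory Submission
  imports Defs
begin

text \<open>Since the simplification of N is free, N is a free matroid on an independent transversal T
  of its parallel classes, enlarged by parallel copies and loops. In a quasi product P every row
  is a copy of N, so moving an entry to the column of its representative in T is a substitution
  of parallel elements and preserves independence; every representative column is a copy of M.
  Hence an independent set of P avoids the loop rows and columns, and for each t in T its entries
  in columns parallel to t lie in distinct rows forming an independent set of M. Conversely, if
  rk P = rk M * card T, a basis of M placed in each representative column gives rk P elements
  spanning P, hence a basis of P, and substituting back shows that every set of this shape is
  independent. So P is determined, and the matroid of these sets is a quasi product of rank
  rk M * rk N.\<close>

text \<open>For independent B, \<open>spans M B y\<close> says that y lies in the closure of B.\<close>
definition spans :: "'a matroid \<Rightarrow> 'a set \<Rightarrow> 'a \<Rightarrow> bool" where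
  "spans M B y \<longleftrightarrow> y \<in> B \<or> \<not> indep M (insert y B)"

lemma parallel_refl: "y \<in> ground M \<Longrightarrow> \<not> loop M y \<Longrightarrow> parallel M y y"
  unfolding parallel_def by simp

lemma parallel_sym: "parallel M y z \<Longrightarrow> parallel M z y"
  unfolding parallel_def by (auto simp: insert_commute)

lemma spans_if_parallel: "parallel M y z \<Longrightarrow> spans M {z} y"
  unfolding parallel_def spans_def by auto

lemma restrict_indep: "indep (restrict M S) I \<longleftrightarrow> indep M I \<and> I \<subseteq> S"
  unfolding restrict_def indep_def by simp

lemma restrict_ground: "ground (restrict M S) = S"
  unfolding restrict_def ground_def by simp

locale finite_matroid =
  fixes M :: "'a matroid"
  assumes matroid: "matroid M"
begin

lemma finite_ground: "finite (ground M)"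
  using matroid unfolding matroid_def by blast

lemma indep_subset_ground: "indep M I \<Longrightarrow> I \<subseteq> ground M"
  using matroid unfolding matroid_def by blast

lemma indep_empty: "indep M {}"
  using matroid unfolding matroid_def by blast

lemma indep_subset: "indep M J \<Longrightarrow> I \<subseteq> J \<Longrightarrow> indep M I"
  using matroid unfolding matroid_def by blast

lemma indep_augment:
  "indep M I \<Longrightarrow> indep M J \<Longrightarrow> card I < card J \<Longrightarrow> \<exists>x\<in>J - I. indep M (insert x I)"
  using matroid unfolding matroid_def by blast

lemma indep_finite: "indep M I \<Longrightarrow> finite I"
  using indep_subset_ground finite_ground finite_subset by blast

lemma not_loop_if_indep: "indep M I \<Longrightarrow> x \<in> I \<Longrightarrow> \<not> loop M x"
  unfolding loop_def using indep_subset by blast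

lemma indep_singleton_if_not_loop: "x \<in> ground M \<Longrightarrow> \<not> loop M x \<Longrightarrow> indep M {x}"
  unfolding loop_def by blast

lemma indep_extend_to_card:
  assumes "indep M A" "indep M X" "card A \<le> card X"
  shows "\<exists>B. A \<subseteq> B \<and> B \<subseteq> A \<union> X \<and> indep M B \<and> card B = card X"
  using assms
proof (induction "card X - card A" arbitrary: A)
  case 0
  then show ?case by auto
next
  case (Suc d)
  then have "card A < card X" by linarith
  with Suc.prems obtain x where x: "x \<in> X - A" "indep M (insert x A)"
    using indep_augment by blast
  have "card (insert x A) = Suc (card A)"
    using x indep_finite[OF Suc.prems(1)] by simp
  then obtain B where "insert x A \<subseteq> B" "B \<subseteq> insert x A \<union> X" "indep M B" "card B = card X"
    using Suc.hyps(1)[of "insert x A"] Suc.hyps(2) \<open>card A < card X\<close> x(2) Suc.prems(2) by force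
  then show ?case using x by blast
qed

lemma card_le_if_spans:
  assumes "indep M B" "indep M Q" "\<forall>q\<in>Q. spans M B q"
  shows "card Q \<le> card B"
  using indep_augment[OF assms(1,2)] assms(3) unfolding spans_def by force

lemma spans_trans:
  assumes B: "indep M B" and S: "indep M S" and SB: "\<forall>s\<in>S. spans M B s" and y: "spans M S y"
  shows "spans M B y"
proof (rule ccontr)
  assume not_spanned: "\<not> spans M B y"
  then have yB: "y \<notin> B" "indep M (insert y B)" unfolding spans_def by auto
  have "y \<notin> S" using not_spanned SB by blast
  then have yS: "\<not> indep M (insert y S)" using y unfolding spans_def by blast
  have "card S \<le> card B" by (rule card_le_if_spans[OF B S SB])
  also have "\<dots> < card (insert y B)" using yB indep_finite[OF B] by simp
  finally obtain D where D: "S \<subseteq> D" "D \<subseteq> S \<union> insert y B" "indep M D" "card D = card (insert y B)"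
    using indep_extend_to_card[OF S yB(2)] by fastforce
  have "y \<notin> D" using D(1,3) yS indep_subset by blast
  then have "\<forall>q\<in>D. spans M B q" using D(2) SB unfolding spans_def by blast
  then have "card D \<le> card B" by (rule card_le_if_spans[OF B D(3)])
  then show False using D(4) yB indep_finite[OF B] by simp
qed

lemma finite_indep_subsets: "X \<subseteq> ground M \<Longrightarrow> finite {I. indep M I \<and> I \<subseteq> X}"
  using finite_subset[OF _ finite_ground] by (auto intro: finite_subset[of _ "Pow X"])

lemma card_le_rank: "X \<subseteq> ground M \<Longrightarrow> indep M I \<Longrightarrow> I \<subseteq> X \<Longrightarrow> card I \<le> rank M X"
  unfolding rank_def using finite_indep_subsets by (intro Max_ge) auto

lemma obtain_indep_card_rank:
  assumes "X \<subseteq> ground M"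
  obtains I where "indep M I" "I \<subseteq> X" "card I = rank M X"
proof -
  have "rank M X \<in> card ` {I. indep M I \<and> I \<subseteq> X}"
    unfolding rank_def using finite_indep_subsets[OF assms] indep_empty by (intro Max_in) auto
  then show ?thesis using that by auto
qed

lemma rank_eqI:
  assumes "X \<subseteq> ground M" "indep M I" "I \<subseteq> X" "card I = k"
    and "\<And>J. indep M J \<Longrightarrow> J \<subseteq> X \<Longrightarrow> card J \<le> k"
  shows "rank M X = k"
proof -
  obtain J where "indep M J" "J \<subseteq> X" "card J = rank M X"
    using obtain_indep_card_rank[OF assms(1)] .
  then show ?thesis using card_le_rank[OF assms(1-3)] assms(4,5) by fastforce
qed

lemma rank_eq_0I:
  assumes "X \<subseteq> ground M" "\<And>x. x \<in> X \<Longrightarrow> \<not> indep M {x}"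
  shows "rank M X = 0"
proof (rule rank_eqI[OF assms(1) indep_empty])
  fix J assume "indep M J" "J \<subseteq> X"
  then have "J = {}" using assms(2) indep_subset by blast
  then show "card J \<le> 0" by simp
qed auto

lemma not_indep_singleton_if_rank_0:
  "X \<subseteq> ground M \<Longrightarrow> rank M X = 0 \<Longrightarrow> x \<in> X \<Longrightarrow> \<not> indep M {x}"
  using card_le_rank[of X "{x}"] by auto

lemma card_le_rk: "indep M I \<Longrightarrow> card I \<le> rk M"
  unfolding rk_def using card_le_rank indep_subset_ground by blast

lemma indep_extend_to_basis:
  assumes "indep M I"
  obtains B where "I \<subseteq> B" "indep M B" "card B = rk M"
proof -
  obtain Q where "indep M Q" "card Q = rk M"
    using obtain_indep_card_rank[of "ground M"] unfolding rk_def by blast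
  then show ?thesis
    using indep_extend_to_card[OF assms] card_le_rk[OF assms] that by metis
qed

lemma spans_if_basis: "indep M B \<Longrightarrow> card B = rk M \<Longrightarrow> spans M B y"
  unfolding spans_def using card_le_rk indep_finite by (metis card_insert_disjoint
      not_less_eq_eq order_refl)

lemma indep_if_spanning:
  assumes X: "X \<subseteq> ground M" "card X \<le> rk M"
    and spanning: "\<And>B. indep M B \<Longrightarrow> \<forall>x\<in>X. spans M B x \<Longrightarrow> \<forall>y\<in>ground M. spans M B y"
  shows "indep M X"
proof -
  obtain B where B: "indep M B" "B \<subseteq> X" "card B = rank M X"
    using obtain_indep_card_rank[OF X(1)] .
  have finite_X: "finite X" using X(1) finite_ground finite_subset by blast
  have "\<forall>x\<in>X. spans M B x"
  proof
    fix x assume x: "x \<in> X"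
    have "\<not> indep M (insert x B)" if "x \<notin> B"
      using card_le_rank[OF X(1), of "insert x B"] x B that finite_subset[OF B(2) finite_X] by auto
    then show "spans M B x" unfolding spans_def by blast
  qed
  then have "\<forall>y\<in>ground M. spans M B y" by (rule spanning[OF B(1)])
  moreover obtain Q where "indep M Q" "Q \<subseteq> ground M" "card Q = rk M"
    using obtain_indep_card_rank[of "ground M"] unfolding rk_def by blast
  ultimately have "rk M \<le> card B" using card_le_if_spans[OF B(1)] by (metis subsetD)
  then have "B = X" using card_seteq[OF finite_X B(2)] X(2) by simp
  then show ?thesis using B(1) by simp
qed

lemma parallel_eq_if_indep: "indep M A \<Longrightarrow> p \<in> A \<Longrightarrow> q \<in> A \<Longrightarrow> parallel M p q \<Longrightarrow> p = q"
  unfolding parallel_def using indep_subset[of A "{p, q}"] by blast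

lemma not_indep_if_parallel_to_same:
  assumes "parallel M y t" "parallel M y' t" "y \<noteq> y'"
  shows "\<not> indep M {y, y'}"
proof
  assume "indep M {y, y'}"
  moreover have "indep M {t}" using assms(1) unfolding parallel_def loop_def by blast
  ultimately obtain x where "x \<in> {y, y'} - {t}" "indep M {x, t}"
    using indep_augment[of "{t}" "{y, y'}"] assms(3) by auto
  then show False using assms(1,2) unfolding parallel_def by (auto simp: insert_commute)
qed

lemma indep_exchange_parallel:
  assumes A: "indep M A" and a: "a \<in> A" and b: "b \<notin> A" and ab: "parallel M a b"
  shows "indep M (insert b (A - {a}))"
proof -
  have finite_A: "finite A" using indep_finite[OF A] .
  have "a \<noteq> b" using a b by blast
  then have dependent: "\<not> indep M {a, b}" using ab unfolding parallel_def by blast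
  have "indep M {b}" using ab unfolding parallel_def loop_def by blast
  moreover have card_A: "card A > 0" using a finite_A card_gt_0_iff by blast
  then have "card {b} \<le> card A" by simp
  ultimately obtain B where B: "{b} \<subseteq> B" "B \<subseteq> {b} \<union> A" "indep M B" "card B = card A"
    using indep_extend_to_card[OF _ A] by blast
  have "a \<notin> B" using B(1,3) dependent indep_subset[of B "{a, b}"] by blast
  then have "B \<subseteq> insert b (A - {a})" using B(2) by blast
  moreover have "card (insert b (A - {a})) = card A"
    using a b finite_A card_A by (simp add: card_Diff_singleton)
  ultimately have "B = insert b (A - {a})"
    using card_subset_eq B(4) finite_A by (metis finite_Diff finite_insert)
  then show ?thesis using B(3) by simp
qed

lemma indep_image_parallel:
  assumes A: "indep M A" and inj: "inj_on h A" and par: "\<And>p. p \<in> A \<Longrightarrow> parallel M p (h p)"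
  shows "indep M (h ` A)"
proof -
  have fixed: "h p = p" if "p \<in> A" "h p \<in> A" for p
    using parallel_eq_if_indep[OF A that par[OF that(1)]] by simp
  have "indep M ((A - F) \<union> h ` F)" if "F \<subseteq> A" for F
  proof -
    have "finite F" using that indep_finite[OF A] finite_subset by blast
    then show ?thesis using that
    proof (induction F rule: finite_induct)
      case empty
      then show ?case using A by simp
    next
      case (insert p F)
      let ?A = "(A - F) \<union> h ` F"
      have IH: "indep M ?A" and p: "p \<in> A" "p \<notin> F" using insert by auto
      show ?case
      proof (cases "h p = p")
        case True
        then have "(A - insert p F) \<union> h ` insert p F = ?A" using p by auto
        then show ?thesis using IH by simp
      next
        case False
        have "p \<notin> h ` F" using fixed insert.prems p by fastforce
        then have "(A - insert p F) \<union> h ` insert p F = insert (h p) (?A - {p})" by auto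
        moreover have "h p \<notin> ?A"
          using fixed False p insert.prems inj_on_image_mem_iff[OF inj] by auto
        ultimately show ?thesis
          using indep_exchange_parallel[OF IH _ _ par[OF p(1)]] p by simp
      qed
    qed
  qed
  from this[of A] show ?thesis by simp
qed

lemma indep_of_image_parallel:
  assumes "indep M (h ` J)" "inj_on h J" "\<And>y. y \<in> J \<Longrightarrow> parallel M y (h y)"
  shows "indep M J"
proof -
  have "indep M (inv_into J h ` h ` J)"
  proof (rule indep_image_parallel[OF assms(1)])
    show "inj_on (inv_into J h) (h ` J)" by (rule inj_on_inv_into) simp
    show "parallel M p (inv_into J h p)" if "p \<in> h ` J" for p
      using that assms(2,3) parallel_sym[of M] by auto
  qed
  then show ?thesis using assms(2) by simp
qed

end

lemma matroid_iso_restrict_image_iff: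
  assumes "inj_on f (ground N)"
  shows "matroid_iso f N (restrict P (f ` ground N)) \<longleftrightarrow>
    (\<forall>J\<subseteq>ground N. indep N J \<longleftrightarrow> indep P (f ` J))"
  using assms unfolding matroid_iso_def restrict_ground restrict_indep bij_betw_def by blast

lemma row_eq_image: "{e} \<times> A = (\<lambda>x. (e, x)) ` A"
  by auto

lemma column_eq_image: "A \<times> {f} = (\<lambda>x. (x, f)) ` A"
  by auto

locale free_simplification =
  M: finite_matroid M + N: finite_matroid N
  for M :: "'a matroid" and N :: "'b matroid" +
  fixes T :: "'b set"
  assumes indep_T: "indep N T"
    and unique_rep: "\<And>y. y \<in> ground N \<Longrightarrow> \<not> loop N y \<Longrightarrow> \<exists>!t. t \<in> T \<and> parallel N y t"
begin

definition rep :: "'b \<Rightarrow> 'b" where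
  "rep y = (THE t. t \<in> T \<and> parallel N y t)"

lemma rep: "y \<in> ground N \<Longrightarrow> \<not> loop N y \<Longrightarrow> rep y \<in> T \<and> parallel N y (rep y)"
  unfolding rep_def by (rule theI'[OF unique_rep])

lemma rep_eq:
  assumes "t \<in> T" "parallel N y t"
  shows "rep y = t"
proof -
  have "y \<in> ground N" "\<not> loop N y" using assms(2) unfolding parallel_def by auto
  then show ?thesis unfolding rep_def using assms by (intro the1_equality[OF unique_rep]) auto
qed

lemma finite_T: "finite T"
  using N.indep_finite[OF indep_T] .

lemma nonloop_if_mem_T: "t \<in> T \<Longrightarrow> t \<in> ground N \<and> \<not> loop N t"
  using N.indep_subset_ground N.not_loop_if_indep indep_T by blast

lemma spans_T: "y \<in> ground N \<Longrightarrow> spans N T y"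
proof (cases "loop N y")
  case True
  then show ?thesis unfolding spans_def loop_def using N.indep_subset by blast
next
  case False
  assume y: "y \<in> ground N"
  show ?thesis
  proof (rule N.spans_trans[OF indep_T])
    show "indep N {rep y}" and "\<forall>s\<in>{rep y}. spans N T s"
      using rep[OF y False] N.indep_subset[OF indep_T] unfolding spans_def by auto
    show "spans N {rep y} y" using rep[OF y False] by (blast intro: spans_if_parallel)
  qed
qed

lemma rk_N: "rk N = card T"
  unfolding rk_def
proof (rule N.rank_eqI)
  show "indep N T" "T \<subseteq> ground N" using indep_T N.indep_subset_ground by auto
  fix J assume "indep N J" "J \<subseteq> ground N"
  then show "card J \<le> card T" using N.card_le_if_spans[OF indep_T] spans_T by blast
qed auto

definition class_part :: "('a \<times> 'b) set \<Rightarrow> 'b \<Rightarrow> ('a \<times> 'b) set" where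
  "class_part I t = {p\<in>I. parallel N (snd p) t}"

text \<open>The tensor product of M and N: one copy of M for each parallel class of N, with the
  columns of a class identified.\<close>
definition tensor_indep :: "('a \<times> 'b) set \<Rightarrow> bool" where
  "tensor_indep I \<longleftrightarrow> I \<subseteq> ground M \<times> ground N
     \<and> (\<forall>p\<in>I. \<not> loop M (fst p) \<and> \<not> loop N (snd p))
     \<and> (\<forall>t\<in>T. inj_on fst (class_part I t) \<and> indep M (fst ` class_part I t))"

lemma tensor_indep_subset: "tensor_indep I \<Longrightarrow> J \<subseteq> I \<Longrightarrow> tensor_indep J"
proof -
  assume I: "tensor_indep I" and J: "J \<subseteq> I"
  then have "class_part J t \<subseteq> class_part I t" for t unfolding class_part_def by auto
  then show "tensor_indep J"
    using I J unfolding tensor_indep_def by (meson M.indep_subset image_mono inj_on_subset subset_iff)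
qed

lemma tensor_indep_finite: "tensor_indep I \<Longrightarrow> finite I"
  unfolding tensor_indep_def using M.finite_ground N.finite_ground finite_subset by blast

lemma card_tensor_indep_eq_sum:
  assumes I: "tensor_indep I"
  shows "card I = (\<Sum>t\<in>T. card (class_part I t))"
proof -
  have "snd p \<in> ground N" "\<not> loop N (snd p)" if "p \<in> I" for p
    using I that unfolding tensor_indep_def by auto
  then have "I = (\<Union>t\<in>T. class_part I t)" using rep unfolding class_part_def by blast
  moreover have "card (\<Union>t\<in>T. class_part I t) = (\<Sum>t\<in>T. card (class_part I t))"
    using tensor_indep_finite[OF I] rep_eq
    by (intro card_UN_disjoint[OF finite_T]) (auto simp: class_part_def)
  ultimately show ?thesis by simp
qed

lemma card_le_if_tensor_indep:
  assumes I: "tensor_indep I"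
  shows "card I \<le> rk M * card T"
proof -
  have "card (class_part I t) \<le> rk M" if "t \<in> T" for t
    using I that M.card_le_rk card_image unfolding tensor_indep_def by metis
  moreover note card_tensor_indep_eq_sum[OF I]
  ultimately show ?thesis
    using sum_bounded_above[of T "\<lambda>t. card (class_part I t)" "rk M"] by (simp add: mult.commute)
qed

lemma tensor_indep_insert:
  assumes I: "tensor_indep I" and p: "p \<in> ground M \<times> ground N" "\<not> loop M (fst p)" "\<not> loop N (snd p)"
    and new_row: "fst p \<notin> fst ` class_part I (rep (snd p))"
    and indep_row: "indep M (insert (fst p) (fst ` class_part I (rep (snd p))))"
  shows "tensor_indep (insert p I)"
proof -
  let ?t = "rep (snd p)"
  have t: "?t \<in> T" "parallel N (snd p) ?t" using rep p by auto
  have "inj_on fst (class_part (insert p I) t) \<and> indep M (fst ` class_part (insert p I) t)"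
    if "t \<in> T" for t
  proof (cases "t = ?t")
    case True
    then have "class_part (insert p I) t = insert p (class_part I ?t)"
      using t unfolding class_part_def by auto
    then show ?thesis using I new_row indep_row t(1) True unfolding tensor_indep_def by auto
  next
    case False
    then have "class_part (insert p I) t = class_part I t"
      using rep_eq[OF that] unfolding class_part_def by auto
    then show ?thesis using I that unfolding tensor_indep_def by simp
  qed
  then show ?thesis using I p unfolding tensor_indep_def by auto
qed

lemma tensor_indep_augment:
  assumes I: "tensor_indep I" and J: "tensor_indep J" and card: "card I < card J"
  shows "\<exists>p\<in>J - I. tensor_indep (insert p I)"
proof -
  obtain t where t: "t \<in> T" "card (class_part I t) < card (class_part J t)"
    using card card_tensor_indep_eq_sum[OF I] card_tensor_indep_eq_sum[OF J]
      sum_mono[of T "\<lambda>t. card (class_part J t)" "\<lambda>t. card (class_part I t)"]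
    by (metis not_le)
  have inj: "inj_on fst (class_part I t)" "inj_on fst (class_part J t)"
    and indep: "indep M (fst ` class_part I t)" "indep M (fst ` class_part J t)"
    using I J t(1) unfolding tensor_indep_def by auto
  moreover have "card (fst ` class_part I t) < card (fst ` class_part J t)"
    using t(2) inj by (simp add: card_image)
  ultimately obtain x where x: "x \<in> fst ` class_part J t - fst ` class_part I t"
    "indep M (insert x (fst ` class_part I t))"
    using M.indep_augment by blast
  then obtain p where p: "p \<in> J" "parallel N (snd p) t" "fst p = x"
    unfolding class_part_def by auto
  then have rep_p: "rep (snd p) = t" using rep_eq t(1) by blast
  have "tensor_indep (insert p I)"
  proof (rule tensor_indep_insert[OF I])
    show "p \<in> ground M \<times> ground N" "\<not> loop M (fst p)" "\<not> loop N (snd p)"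
      using J p(1) unfolding tensor_indep_def by auto
    show "fst p \<notin> fst ` class_part I (rep (snd p))"
      and "indep M (insert (fst p) (fst ` class_part I (rep (snd p))))"
      using x p(3) rep_p by auto
  qed
  moreover have "p \<notin> I" using p x unfolding class_part_def by auto
  ultimately show ?thesis using p(1) by blast
qed

definition tensor :: "('a \<times> 'b) matroid" where
  "tensor = (ground M \<times> ground N, Collect tensor_indep)"

lemma ground_tensor: "ground tensor = ground M \<times> ground N"
  unfolding tensor_def ground_def by simp

lemma indep_tensor: "indep tensor I \<longleftrightarrow> tensor_indep I"
  unfolding tensor_def indep_def by simp

lemma matroid_tensor: "matroid tensor"
  unfolding matroid_def ground_tensor indep_tensor
proof (intro conjI allI impI)
  show "finite (ground M \<times> ground N)" using M.finite_ground N.finite_ground by simp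
  show "tensor_indep {}" unfolding tensor_indep_def class_part_def using M.indep_empty by simp
next
  fix I assume "tensor_indep I"
  then show "I \<subseteq> ground M \<times> ground N" unfolding tensor_indep_def by simp
next
  fix I J assume "tensor_indep J \<and> I \<subseteq> J"
  then show "tensor_indep I" using tensor_indep_subset by blast
next
  fix I J assume "tensor_indep I \<and> tensor_indep J \<and> card I < card J"
  then show "\<exists>x\<in>J - I. tensor_indep (insert x I)" using tensor_indep_augment by blast
qed

lemma tensor_indep_row_iff:
  assumes e: "e \<in> ground M" "\<not> loop M e" and J: "J \<subseteq> ground N"
  shows "tensor_indep ((\<lambda>y. (e, y)) ` J) \<longleftrightarrow> indep N J"
proof
  assume indep_J: "indep N J"
  have "inj_on fst (class_part ((\<lambda>y. (e, y)) ` J) t)" for t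
  proof (rule inj_onI)
    fix p q assume "p \<in> class_part ((\<lambda>y. (e, y)) ` J) t" "q \<in> class_part ((\<lambda>y. (e, y)) ` J) t"
      and "fst p = fst q"
    then obtain y y' where "p = (e, y)" "q = (e, y')" "{y, y'} \<subseteq> J" "parallel N y t" "parallel N y' t"
      unfolding class_part_def by auto
    then show "p = q" using N.not_indep_if_parallel_to_same N.indep_subset[OF indep_J] by blast
  qed
  moreover have "indep M (fst ` class_part ((\<lambda>y. (e, y)) ` J) t)" for t
  proof (rule M.indep_subset[OF M.indep_singleton_if_not_loop[OF e]])
    show "fst ` class_part ((\<lambda>y. (e, y)) ` J) t \<subseteq> {e}" unfolding class_part_def by auto
  qed
  ultimately show "tensor_indep ((\<lambda>y. (e, y)) ` J)"
    using e J N.not_loop_if_indep[OF indep_J] unfolding tensor_indep_def by auto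
next
  assume indep_row: "tensor_indep ((\<lambda>y. (e, y)) ` J)"
  have rep_y: "rep y \<in> T \<and> parallel N y (rep y)" if "y \<in> J" for y
    using rep indep_row J that unfolding tensor_indep_def by auto
  show "indep N J"
  proof (rule N.indep_of_image_parallel)
    show "indep N (rep ` J)" using N.indep_subset[OF indep_T] rep_y by blast
    show "parallel N y (rep y)" if "y \<in> J" for y using rep_y[OF that] by simp
    show "inj_on rep J"
    proof (rule inj_onI)
      fix y y' assume y: "y \<in> J" "y' \<in> J" "rep y = rep y'"
      have "(e, y) \<in> class_part ((\<lambda>y. (e, y)) ` J) (rep y)"
        using y(1) rep_y[OF y(1)] unfolding class_part_def by auto
      moreover have "(e, y') \<in> class_part ((\<lambda>y. (e, y)) ` J) (rep y)"
        using y(2) rep_y[OF y(2)] unfolding y(3) class_part_def by auto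
      moreover have "inj_on fst (class_part ((\<lambda>y. (e, y)) ` J) (rep y))"
        using indep_row rep_y[OF y(1)] unfolding tensor_indep_def by blast
      ultimately show "y = y'" using inj_onD by fastforce
    qed
  qed
qed

lemma tensor_indep_column_iff:
  assumes f: "f \<in> ground N" "\<not> loop N f" and J: "J \<subseteq> ground M"
  shows "tensor_indep ((\<lambda>x. (x, f)) ` J) \<longleftrightarrow> indep M J"
proof -
  have class_part: "class_part ((\<lambda>x. (x, f)) ` J) t = (if parallel N f t then (\<lambda>x. (x, f)) ` J else {})"
    for t unfolding class_part_def by auto
  have "inj_on fst ((\<lambda>x. (x, f)) ` J)" "fst ` (\<lambda>x. (x, f)) ` J = J"
    by (auto simp: inj_on_def image_image)
  moreover have "rep f \<in> T" "parallel N f (rep f)" using rep[OF f] by auto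
  ultimately show ?thesis
    using f J M.indep_empty M.not_loop_if_indep unfolding tensor_indep_def class_part by auto
qed

lemma tensor_row_iso:
  "e \<in> ground M \<Longrightarrow> \<not> loop M e \<Longrightarrow> matroid_iso (\<lambda>y. (e, y)) N (restrict tensor ({e} \<times> ground N))"
  unfolding row_eq_image
  by (subst matroid_iso_restrict_image_iff) (auto simp: inj_on_def indep_tensor tensor_indep_row_iff)

lemma tensor_column_iso:
  "f \<in> ground N \<Longrightarrow> \<not> loop N f \<Longrightarrow> matroid_iso (\<lambda>x. (x, f)) M (restrict tensor (ground M \<times> {f}))"
  unfolding column_eq_image
  by (subst matroid_iso_restrict_image_iff) (auto simp: inj_on_def indep_tensor tensor_indep_column_iff)

interpretation tensor: finite_matroid tensor
  by (rule finite_matroid.intro[OF matroid_tensor])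

lemma rank_tensor_loop_row: "e \<in> ground M \<Longrightarrow> loop M e \<Longrightarrow> rank tensor ({e} \<times> ground N) = 0"
  by (rule tensor.rank_eq_0I) (auto simp: ground_tensor indep_tensor tensor_indep_def)

lemma rank_tensor_loop_column: "f \<in> ground N \<Longrightarrow> loop N f \<Longrightarrow> rank tensor (ground M \<times> {f}) = 0"
  by (rule tensor.rank_eq_0I) (auto simp: ground_tensor indep_tensor tensor_indep_def)

lemma tensor_indep_times_T:
  assumes "indep M B"
  shows "tensor_indep (B \<times> T)"
proof -
  have "class_part (B \<times> T) t = B \<times> {t}" if "t \<in> T" for t
    using that nonloop_if_mem_T N.parallel_eq_if_indep[OF indep_T] parallel_refl[of t N]
    unfolding class_part_def by auto
  then show ?thesis
    using assms nonloop_if_mem_T M.indep_subset_ground[OF assms] M.not_loop_if_indep[OF assms]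
    unfolding tensor_indep_def by (auto simp: inj_on_def)
qed

lemma rk_tensor: "rk tensor = rk M * card T"
proof -
  obtain B where B: "indep M B" "card B = rk M"
    using M.indep_extend_to_basis[OF M.indep_empty] by blast
  then have "indep tensor (B \<times> T)" using tensor_indep_times_T by (simp add: indep_tensor)
  then show ?thesis unfolding rk_def[of tensor]
    using B(2) tensor.indep_subset_ground card_le_if_tensor_indep
    by (intro tensor.rank_eqI[of _ "B \<times> T"]) (auto simp: indep_tensor card_cartesian_product)
qed

lemma tensor_product_tensor: "tensor_product M N tensor"
  unfolding tensor_product_def quasi_product_def rk_N
  using matroid_tensor ground_tensor tensor_row_iso tensor_column_iso
    rank_tensor_loop_row rank_tensor_loop_column rk_tensor by simp

context
  fixes P :: "('a \<times> 'b) matroid"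
  assumes quasi: "quasi_product M N P" and rk_P: "rk P = rk M * card T"
begin

interpretation P: finite_matroid P
  using quasi unfolding quasi_product_def by (simp add: finite_matroid.intro)

lemma ground_P: "ground P = ground M \<times> ground N"
  using quasi unfolding quasi_product_def by simp

lemma indep_row_iff:
  assumes "e \<in> ground M" "\<not> loop M e" "J \<subseteq> ground N"
  shows "indep P ((\<lambda>y. (e, y)) ` J) \<longleftrightarrow> indep N J"
proof -
  have "matroid_iso (\<lambda>y. (e, y)) N (restrict P ((\<lambda>y. (e, y)) ` ground N))"
    using quasi assms unfolding quasi_product_def row_eq_image by blast
  then show ?thesis using assms(3) by (subst (asm) matroid_iso_restrict_image_iff) (auto simp: inj_on_def)
qed

lemma indep_column_iff:
  assumes "f \<in> ground N" "\<not> loop N f" "J \<subseteq> ground M"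
  shows "indep P ((\<lambda>x. (x, f)) ` J) \<longleftrightarrow> indep M J"
proof -
  have "matroid_iso (\<lambda>x. (x, f)) M (restrict P ((\<lambda>x. (x, f)) ` ground M))"
    using quasi assms unfolding quasi_product_def column_eq_image by blast
  then show ?thesis using assms(3) by (subst (asm) matroid_iso_restrict_image_iff) (auto simp: inj_on_def)
qed

lemma indep_P_element:
  assumes "indep P I" "p \<in> I"
  shows "p \<in> ground M \<times> ground N" "\<not> loop M (fst p)" "\<not> loop N (snd p)"
proof -
  show p: "p \<in> ground M \<times> ground N" using P.indep_subset_ground assms ground_P by auto
  have p_indep: "indep P {p}" using assms P.indep_subset by blast
  show "\<not> loop M (fst p)"
  proof
    assume "loop M (fst p)"
    then have "rank P ({fst p} \<times> ground N) = 0" using quasi p unfolding quasi_product_def by auto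
    moreover have "{fst p} \<times> ground N \<subseteq> ground P" "p \<in> {fst p} \<times> ground N"
      using p by (auto simp: ground_P mem_Times_iff)
    ultimately show False using P.not_indep_singleton_if_rank_0[of "{fst p} \<times> ground N" p] p_indep by simp
  qed
  show "\<not> loop N (snd p)"
  proof
    assume "loop N (snd p)"
    then have "rank P (ground M \<times> {snd p}) = 0" using quasi p unfolding quasi_product_def by auto
    moreover have "ground M \<times> {snd p} \<subseteq> ground P" "p \<in> ground M \<times> {snd p}"
      using p by (auto simp: ground_P mem_Times_iff)
    ultimately show False using P.not_indep_singleton_if_rank_0[of "ground M \<times> {snd p}" p] p_indep by simp
  qed
qed

lemma parallel_in_row:
  assumes x: "x \<in> ground M" "\<not> loop M x" and yt: "parallel N y t"
  shows "parallel P (x, y) (x, t)"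
proof -
  have "{y, t} \<subseteq> ground N" "indep N {y}" "indep N {t}" "y \<noteq> t \<Longrightarrow> \<not> indep N {y, t}"
    using yt unfolding parallel_def loop_def by auto
  then have "indep P {(x, y)}" "indep P {(x, t)}" "y \<noteq> t \<Longrightarrow> \<not> indep P {(x, y), (x, t)}"
    using indep_row_iff[OF x, of "{y}"] indep_row_iff[OF x, of "{t}"] indep_row_iff[OF x, of "{y, t}"]
    by auto
  then show ?thesis using x yt unfolding parallel_def loop_def ground_P by auto
qed

lemma tensor_indep_if_indep_P:
  assumes I: "indep P I"
  shows "tensor_indep I"
proof -
  have "inj_on fst (class_part I t) \<and> indep M (fst ` class_part I t)" if t: "t \<in> T" for t
  proof -
    let ?C = "class_part I t" and ?h = "\<lambda>p. (fst p, t)"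
    have C: "indep P ?C" by (rule P.indep_subset[OF I]) (auto simp: class_part_def)
    have parallel: "parallel P p (?h p)" if "p \<in> ?C" for p
      using parallel_in_row[of "fst p" "snd p" t] indep_P_element[OF C that] that
      unfolding class_part_def by auto
    have inj: "inj_on fst ?C"
    proof (rule inj_onI)
      fix p q assume pq: "p \<in> ?C" "q \<in> ?C" "fst p = fst q"
      then have "parallel P q (?h p)" using parallel by simp
      show "p = q"
      proof (rule ccontr)
        assume "p \<noteq> q"
        then have "\<not> indep P {p, q}"
          using P.not_indep_if_parallel_to_same[OF parallel[OF pq(1)] \<open>parallel P q (?h p)\<close>] by simp
        moreover have "indep P {p, q}" using P.indep_subset[OF C] pq(1,2) by simp
        ultimately show False by simp
      qed
    qed
    then have "indep P (?h ` ?C)"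
      by (intro P.indep_image_parallel[OF C] parallel) (auto simp: inj_on_def)
    moreover have "?h ` ?C = (\<lambda>x. (x, t)) ` (fst ` ?C)" by (simp add: image_image)
    moreover have "fst ` ?C \<subseteq> ground M" using indep_P_element[OF C] by auto
    moreover have "t \<in> ground N" "\<not> loop N t" using nonloop_if_mem_T[OF t] by auto
    ultimately show ?thesis using inj indep_column_iff by simp
  qed
  then show ?thesis using indep_P_element[OF I] unfolding tensor_indep_def by auto
qed

lemma spans_column_basis:
  assumes t: "t \<in> T" and D: "indep M D" "card D = rk M" and x: "x \<in> ground M"
  shows "spans P ((\<lambda>z. (z, t)) ` D) (x, t)"
proof -
  have "t \<in> ground N" "\<not> loop N t" using nonloop_if_mem_T[OF t] by auto
  moreover have "x \<in> D \<or> \<not> indep M (insert x D)" using M.spans_if_basis[OF D] unfolding spans_def .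
  ultimately show ?thesis
    using indep_column_iff[of t "insert x D"] x M.indep_subset_ground[OF D(1)] unfolding spans_def by auto
qed

lemma spans_if_spans_column_bases:
  assumes D: "\<And>t. t \<in> T \<Longrightarrow> indep M (D t) \<and> card (D t) = rk M"
    and B: "indep P B" "\<forall>x\<in>(\<Union>t\<in>T. D t \<times> {t}). spans P B x"
    and q: "q \<in> ground P"
  shows "spans P B q"
proof (cases "indep P {q}")
  case False
  then show ?thesis unfolding spans_def using P.indep_subset by blast
next
  case True
  then obtain x y where q: "q = (x, y)" "x \<in> ground M" "\<not> loop M x" "y \<in> ground N" "\<not> loop N y"
    using indep_P_element[of "{q}" q] by (cases q) auto
  let ?t = "rep y"
  have t: "?t \<in> T" "parallel N y ?t" using rep q by auto
  then have "indep P ((\<lambda>z. (z, ?t)) ` D ?t)"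
    using D[OF t(1)] nonloop_if_mem_T indep_column_iff M.indep_subset_ground by auto
  then have spans_xt: "spans P B (x, ?t)"
  proof (rule P.spans_trans[OF B(1)])
    show "\<forall>s\<in>(\<lambda>z. (z, ?t)) ` D ?t. spans P B s" using B(2) t(1) by blast
    show "spans P ((\<lambda>z. (z, ?t)) ` D ?t) (x, ?t)"
      using spans_column_basis[OF t(1) _ _ q(2)] D[OF t(1)] by blast
  qed
  have par: "parallel P q (x, ?t)" using parallel_in_row[OF q(2,3) t(2)] q(1) by simp
  then have "indep P {(x, ?t)}" unfolding parallel_def loop_def by blast
  then show ?thesis
  proof (rule P.spans_trans[OF B(1)])
    show "\<forall>s\<in>{(x, ?t)}. spans P B s" using spans_xt by simp
    show "spans P {(x, ?t)} q" using par by (rule spans_if_parallel)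
  qed
qed

lemma indep_union_column_bases:
  assumes D: "\<And>t. t \<in> T \<Longrightarrow> indep M (D t) \<and> card (D t) = rk M"
  shows "indep P (\<Union>t\<in>T. D t \<times> {t})"
proof (rule P.indep_if_spanning)
  let ?X = "\<Union>t\<in>T. D t \<times> {t}"
  show "?X \<subseteq> ground P"
    using D M.indep_subset_ground nonloop_if_mem_T by (fastforce simp: ground_P)
  have "card ?X = (\<Sum>t\<in>T. card (D t \<times> {t}))"
    using D M.indep_finite by (intro card_UN_disjoint[OF finite_T]) auto
  also have "\<dots> = rk P" using D rk_P by (simp add: card_cartesian_product)
  finally show "card ?X \<le> rk P" by simp
  show "\<forall>q\<in>ground P. spans P B q" if "indep P B" "\<forall>x\<in>?X. spans P B x" for B
    using spans_if_spans_column_bases[OF D that] by blast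
qed

lemma indep_P_if_tensor_indep:
  assumes I: "tensor_indep I"
  shows "indep P I"
proof -
  have "\<forall>t\<in>T. \<exists>D. fst ` class_part I t \<subseteq> D \<and> indep M D \<and> card D = rk M"
    using I M.indep_extend_to_basis unfolding tensor_indep_def by metis
  then obtain D where D: "\<And>t. t \<in> T \<Longrightarrow> fst ` class_part I t \<subseteq> D t \<and> indep M (D t) \<and> card (D t) = rk M"
    by metis
  let ?h = "\<lambda>p. (fst p, rep (snd p))"
  have p: "rep (snd p) \<in> T" "p \<in> class_part I (rep (snd p))" "fst p \<in> ground M" "\<not> loop M (fst p)"
    if "p \<in> I" for p
  proof -
    have "snd p \<in> ground N" "\<not> loop N (snd p)" "fst p \<in> ground M" "\<not> loop M (fst p)"
      using I that unfolding tensor_indep_def by auto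
    then show "rep (snd p) \<in> T" "p \<in> class_part I (rep (snd p))" "fst p \<in> ground M" "\<not> loop M (fst p)"
      using rep that unfolding class_part_def by auto
  qed
  show ?thesis
  proof (rule P.indep_of_image_parallel)
    have "?h ` I \<subseteq> (\<Union>t\<in>T. D t \<times> {t})" using p D by fastforce
    then show "indep P (?h ` I)" using P.indep_subset indep_union_column_bases D by blast
    show "inj_on ?h I"
    proof (rule inj_onI)
      fix p q assume "p \<in> I" "q \<in> I" "?h p = ?h q"
      then show "p = q" using p I unfolding tensor_indep_def by (metis inj_onD prod.inject)
    qed
    show "parallel P p (?h p)" if "p \<in> I" for p
      using parallel_in_row[OF p(3,4)[OF that], of "snd p"] p(2)[OF that]
      unfolding class_part_def by simp
  qed
qed

lemma quasi_product_eq_tensor: "P = tensor"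
proof (rule prod_eqI)
  show "fst P = fst tensor" using ground_P ground_tensor unfolding ground_def by simp
  show "snd P = snd tensor"
    using tensor_indep_if_indep_P indep_P_if_tensor_indep indep_tensor unfolding indep_def by blast
qed

end

end

lemma simplification_is_free_obtain_transversal:
  assumes "simplification_is_free N n"
  obtains T where "indep N T"
    and "\<And>y. y \<in> ground N \<Longrightarrow> \<not> loop N y \<Longrightarrow> \<exists>!t. t \<in> T \<and> parallel N y t"
proof -
  obtain S f T where iso: "matroid_iso f S (free_matroid n)" and S: "S = restrict N T"
    and T: "\<forall>y\<in>ground N. \<not> loop N y \<longrightarrow> (\<exists>!t. t \<in> T \<and> parallel N y t)"
    using assms unfolding simplification_is_free_def is_simplification_def by blast
  then have "f ` T \<subseteq> {0..<n}"
    unfolding matroid_iso_def bij_betw_def free_matroid_def ground_def by (simp add: restrict_def)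
  then have "indep S T"
    using iso S unfolding matroid_iso_def by (simp add: restrict_ground free_matroid_def indep_def)
  then show ?thesis using that T S by (simp add: restrict_indep)
qed

theorem corollary2p5:
  fixes M :: "'a matroid" and N :: "'b matroid" and n :: nat
  assumes "matroid M" and "matroid N"
    and "simplification_is_free N n"
  shows "\<exists>!P. tensor_product M N P"
proof -
  obtain T where "indep N T" "\<And>y. y \<in> ground N \<Longrightarrow> \<not> loop N y \<Longrightarrow> \<exists>!t. t \<in> T \<and> parallel N y t"
    using simplification_is_free_obtain_transversal[OF assms(3)] by blast
  then interpret free_simplification M N T
    using assms(1,2) by (simp add: free_simplification_def free_simplification_axioms_def finite_matroid_def)
  show ?thesis
  proof (rule ex1I[of _ tensor])
    show "tensor_product M N tensor" by (rule tensor_product_tensor)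
    fix P assume "tensor_product M N P"
    then show "P = tensor" using quasi_product_eq_tensor rk_N unfolding tensor_product_def by simp
  qed
qed

end
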